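(* Let $1<\beta\le2$. There is a set $\mathcal F\subset[0,1]$ of full Lebesgue measure such that for every $x\in\mathcal F$ and every $\alpha\in(0,1)$, the function $G_\beta$ is pointwise $\alpha$-Hölder continuous at $x$; that is, there exists a constant $C=C(x,\alpha)>0$ with $|G_\beta(y)-G_\beta(x)|\le C|y-x|^\alpha$ for all $y\in(0,1)$.
   Context: Fix $1<\beta\le 2$. The beta-map is $\tau_\beta:[0,1]\to[0,1]$, $\tau_\beta(x)=\beta x-[\beta x]$, where $[y]$ is the integer part of $y$. Let $m_\beta$ be the unique $\tau_\beta$-invariant Borel probability measure absolutely continuous with respect to Lebesgue measure. For $x\in[0,1]$ and $n\ge1$ the digits are $g_n(x)=[\beta\,\tau_\beta^{n-1}(x)]$, so that $x=\sum_{n\ge1}g_n(x)\beta^{-n}$ (greedy $\beta$-expansion). Put $M_\beta=m_\beta([1/\beta,1])=\int_0^1 g_1\,dm_\beta$. The generalized Takagi function is \[ G_\beta(x)=\frac{g_1(x)}{\beta}+\sum_{n=2}^\infty\frac{g_n(x)}{\beta^n}\Bigl(n-\frac{1}{M_\beta}\sum_{i=1}^{n-1}g_i(x)\Bigr),\qquad x\in[0,1]. \] *)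

theory Defs
  imports "HOL-Probability.Probability"
begin

definition beta_map :: "real \<Rightarrow> real \<Rightarrow> real" where
  "beta_map \<beta> x = \<beta> * x - of_int \<lfloor>\<beta> * x\<rfloor>"

definition beta_digit :: "real \<Rightarrow> nat \<Rightarrow> real \<Rightarrow> real" where
  "beta_digit \<beta> n x = of_int \<lfloor>\<beta> * ((beta_map \<beta> ^^ (n - 1)) x)\<rfloor>"

definition is_beta_acim :: "real \<Rightarrow> real measure \<Rightarrow> bool" where
  "is_beta_acim \<beta> M \<longleftrightarrow>
     prob_space M \<and> space M = {0..1} \<and>
     sets M = sets (restrict_space borel {0..1::real}) \<and>
     absolutely_continuous (restrict_space lborel {0..1::real}) M \<and>
     beta_map \<beta> \<in> measurable M M \<and> distr M M (beta_map \<beta>) = M"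

definition beta_acim :: "real \<Rightarrow> real measure" where
  "beta_acim \<beta> = (THE M. is_beta_acim \<beta> M)"

definition M_beta :: "real \<Rightarrow> real" where
  "M_beta \<beta> = measure (beta_acim \<beta>) {1/\<beta>..1}"

definition G_beta :: "real \<Rightarrow> real \<Rightarrow> real" where
  "G_beta \<beta> x = beta_digit \<beta> 1 x / \<beta> +
     (\<Sum>k. let n = k + 2 in
        beta_digit \<beta> n x / \<beta> ^ n *
          (real n - (1 / M_beta \<beta>) * (\<Sum>i=1..n-1. beta_digit \<beta> i x)))"

end

theory Submission
  imports Defs "HOL-Real_Asymp.Real_Asymp"
begin

(* Write tau for the beta-map.  The digit maps are discontinuous only where beta * tau^i x is an
   integer, and dist_int (beta * tau^i x) is the distance to those points.  If the orbit of x
   keeps dist_int (beta * tau^i x) >= c / (i+1)^3, then every y with beta^(n+1) |y - x| below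
   these distances shares its first n digits with x, so G_beta y - G_beta x is a tail of the
   series and is O(n beta^-n); since also |y - x| >= c beta^-(n+1) / (n+1)^3, this gives
   Hoelder continuity of every order alpha < 1 at x.  Every branch of tau starts at 0, so the
   tau^i-preimage of a set E within [0,1) has measure at most (2i+1) |E|; hence the points
   violating the bound for a given c have measure O(c), and almost every x satisfies it for
   some c > 0.  Nothing about M_beta beyond its being a real constant is used. *)

definition dist_int :: "real \<Rightarrow> real" where
  "dist_int u = min (frac u) (1 - frac u)"

lemma floor_eq_if_dist_int_less:
  assumes "\<bar>v - u\<bar> < dist_int u"
  shows "\<lfloor>v\<rfloor> = \<lfloor>u\<rfloor>"
  using assms unfolding dist_int_def frac_def by (simp add: floor_eq_iff abs_less_iff)

lemma dist_int_le_one: "dist_int u \<le> 1"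
  unfolding dist_int_def by (simp add: min_le_iff_disj)

lemma borel_measurable_dist_int [measurable]: "dist_int \<in> borel_measurable borel"
  unfolding dist_int_def frac_def by measurable

lemma beta_map_eq_frac: "beta_map b x = frac (b * x)"
  unfolding beta_map_def frac_def ..

lemma borel_measurable_beta_map [measurable]: "beta_map b \<in> borel_measurable borel"
  unfolding beta_map_def by measurable

lemma beta_map_in_unit: "beta_map b x \<in> {0..<1}"
  by (simp add: beta_map_eq_frac frac_lt_1)

lemma funpow_beta_map_in_unit:
  assumes "x \<in> {0..<1}"
  shows "(beta_map b ^^ n) x \<in> {0..<1}"
  using assms beta_map_in_unit by (cases n) auto

lemma beta_digit_bounds:
  assumes "0 < b" "x \<in> {0..<1}"
  shows "0 \<le> beta_digit b k x" "beta_digit b k x < b"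
proof -
  let ?z = "(beta_map b ^^ (k - 1)) x"
  have "?z \<in> {0..<1}" using assms(2) by (rule funpow_beta_map_in_unit)
  then have "0 \<le> b * ?z" "b * ?z < b" using assms(1) by auto
  then show "0 \<le> beta_digit b k x" "beta_digit b k x < b"
    unfolding beta_digit_def by (auto intro: le_less_trans of_int_floor_le)
qed

lemma floor_orbit_eq_if_close:
  assumes "0 < b" "(beta_map b ^^ j) y - (beta_map b ^^ j) x = b ^ j * (y - x)"
    and "b ^ (j + 1) * \<bar>y - x\<bar> < dist_int (b * (beta_map b ^^ j) x)"
  shows "\<lfloor>b * (beta_map b ^^ j) y\<rfloor> = \<lfloor>b * (beta_map b ^^ j) x\<rfloor>"
proof (rule floor_eq_if_dist_int_less)
  have "\<bar>b * (beta_map b ^^ j) y - b * (beta_map b ^^ j) x\<bar> = b ^ (j + 1) * \<bar>y - x\<bar>"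
    using assms(1,2) by (simp add: right_diff_distrib[symmetric] abs_mult)
  then show "\<bar>b * (beta_map b ^^ j) y - b * (beta_map b ^^ j) x\<bar> < dist_int (b * (beta_map b ^^ j) x)"
    using assms(3) by simp
qed

lemma funpow_beta_map_diff_if_close:
  assumes "0 < b" "\<forall>j<n. b ^ (j + 1) * \<bar>y - x\<bar> < dist_int (b * (beta_map b ^^ j) x)"
  shows "(beta_map b ^^ n) y - (beta_map b ^^ n) x = b ^ n * (y - x)"
  using assms(2)
proof (induction n)
  case (Suc n)
  then have diff: "(beta_map b ^^ n) y - (beta_map b ^^ n) x = b ^ n * (y - x)" by simp
  then have "\<lfloor>b * (beta_map b ^^ n) y\<rfloor> = \<lfloor>b * (beta_map b ^^ n) x\<rfloor>"
    using Suc.prems assms(1) by (intro floor_orbit_eq_if_close) auto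
  then have "(beta_map b ^^ Suc n) y - (beta_map b ^^ Suc n) x
      = b * ((beta_map b ^^ n) y - (beta_map b ^^ n) x)"
    by (simp add: beta_map_def algebra_simps)
  then show ?case using diff by simp
qed simp

lemma beta_digit_eq_if_close:
  assumes "0 < b" "\<forall>j<n. b ^ (j + 1) * \<bar>y - x\<bar> < dist_int (b * (beta_map b ^^ j) x)"
    and "1 \<le> k" "k \<le> n"
  shows "beta_digit b k y = beta_digit b k x"
proof -
  have "(beta_map b ^^ (k - 1)) y - (beta_map b ^^ (k - 1)) x = b ^ (k - 1) * (y - x)"
    using assms by (intro funpow_beta_map_diff_if_close) auto
  moreover have "b ^ (k - 1 + 1) * \<bar>y - x\<bar> < dist_int (b * (beta_map b ^^ (k - 1)) x)"
    using assms(2) \<open>k \<le> n\<close> \<open>1 \<le> k\<close> by (meson diff_less less_le_trans zero_less_one)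
  ultimately show ?thesis
    unfolding beta_digit_def using assms(1) by (simp add: floor_orbit_eq_if_close)
qed

lemma summable_Suc_times_power:
  fixes q :: real
  assumes "\<bar>q\<bar> < 1"
  shows "summable (\<lambda>j. real (Suc j) * q ^ j)"
  using termdiff_converges[of q 1 "\<lambda>_. 1"] assms summable_geometric[of "_ :: real"]
  by (simp add: diffs_def)

lemma abs_suminf_le_if_vanishes_upto:
  fixes d :: "nat \<Rightarrow> real"
  assumes q: "0 < q" "q < 1"
    and bound: "\<And>m. \<bar>d m\<bar> \<le> K * real m * q ^ m" and vanish: "\<And>m. m \<le> n \<Longrightarrow> d m = 0"
  shows "summable d"
    and "\<bar>suminf d\<bar> \<le> K * real (Suc n) * q ^ Suc n * (\<Sum>j. real (Suc j) * q ^ j)"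
proof -
  have "0 \<le> K * q" using bound[of 1] by (simp add: order_trans)
  then have "0 \<le> K" using q by (simp add: zero_le_mult_iff)
  define g where "g j = K * real (Suc n) * q ^ Suc n * (real (Suc j) * q ^ j)" for j
  have g: "summable g"
    unfolding g_def using q by (intro summable_mult summable_Suc_times_power) simp
  have shifted_le: "norm (d (j + Suc n)) \<le> g j" for j
  proof -
    have "\<bar>d (j + Suc n)\<bar> \<le> K * real (j + Suc n) * q ^ (j + Suc n)" by (rule bound)
    also have "\<dots> \<le> K * (real (Suc n) * real (Suc j)) * q ^ (j + Suc n)"
      using q \<open>0 \<le> K\<close> by (intro mult_right_mono mult_left_mono) (auto simp: algebra_simps)
    also have "\<dots> = g j" by (simp add: g_def power_add algebra_simps)
    finally show ?thesis by simp
  qed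
  have "summable (\<lambda>j. d (j + Suc n))"
    by (rule summable_comparison_test'[OF g shifted_le])
  then show "summable d" by (rule summable_iff_shift[THEN iffD1])
  then have "suminf d = (\<Sum>j. d (j + Suc n))"
    using suminf_split_initial_segment[of d "Suc n"] vanish by simp
  also have "\<bar>\<dots>\<bar> \<le> suminf g"
    using norm_suminf_le[OF shifted_le g] by simp
  also have "suminf g = K * real (Suc n) * q ^ Suc n * (\<Sum>j. real (Suc j) * q ^ j)"
    unfolding g_def using q by (intro suminf_mult summable_Suc_times_power) simp
  finally show "\<bar>suminf d\<bar> \<le> K * real (Suc n) * q ^ Suc n * (\<Sum>j. real (Suc j) * q ^ j)" .
qed

definition takagi_term :: "real \<Rightarrow> real \<Rightarrow> nat \<Rightarrow> real \<Rightarrow> real" where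
  "takagi_term b c m z = (if m = 0 then 0
     else beta_digit b m z / b ^ m * (real m - c * (\<Sum>i=1..m-1. beta_digit b i z)))"

lemma abs_takagi_term_le:
  assumes "0 < b" "z \<in> {0..<1}"
  shows "\<bar>takagi_term b c m z\<bar> \<le> b * (1 + b * \<bar>c\<bar>) * real m * (1 / b) ^ m"
proof (cases "m = 0")
  case False
  define S where "S = (\<Sum>i=1..m-1. beta_digit b i z)"
  note digit = beta_digit_bounds[OF assms]
  have "0 \<le> S" unfolding S_def using digit by (intro sum_nonneg) auto
  have "S \<le> real (card {1..m-1}) * b"
    unfolding S_def using digit by (intro sum_bounded_above less_imp_le) auto
  also have "\<dots> \<le> real m * b" using assms(1) by (intro mult_right_mono) auto
  finally have "S \<le> real m * b" .
  have "\<bar>real m - c * S\<bar> \<le> real m + \<bar>c\<bar> * S"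
    using \<open>0 \<le> S\<close> abs_triangle_ineq4[of "real m" "c * S"] by (simp add: abs_mult)
  also have "\<dots> \<le> real m + \<bar>c\<bar> * (real m * b)"
    using \<open>S \<le> real m * b\<close> by (simp add: mult_left_mono)
  also have "\<dots> = (1 + b * \<bar>c\<bar>) * real m" by (simp add: algebra_simps)
  finally have "\<bar>real m - c * S\<bar> \<le> (1 + b * \<bar>c\<bar>) * real m" .
  moreover have "\<bar>beta_digit b m z / b ^ m\<bar> \<le> b * (1 / b) ^ m"
    using digit assms(1) by (simp add: power_one_over divide_right_mono less_imp_le)
  ultimately have "\<bar>beta_digit b m z / b ^ m\<bar> * \<bar>real m - c * S\<bar> \<le> b * (1 / b) ^ m * ((1 + b * \<bar>c\<bar>) * real m)"
    using assms(1) by (intro mult_mono) auto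
  then show ?thesis
    using False unfolding takagi_term_def S_def[symmetric] by (simp add: abs_mult mult_ac)
qed (simp add: takagi_term_def)

lemma summable_takagi_term:
  assumes "1 < b" "z \<in> {0..<1}"
  shows "summable (\<lambda>m. takagi_term b c m z)"
proof (rule abs_suminf_le_if_vanishes_upto(1))
  show "\<bar>takagi_term b c m z\<bar> \<le> b * (1 + b * \<bar>c\<bar>) * real m * (1 / b) ^ m" for m
    using assms by (intro abs_takagi_term_le) auto
qed (use assms in \<open>auto simp: takagi_term_def\<close>)

lemma G_beta_eq_suminf_takagi_term:
  assumes "1 < b" "z \<in> {0..<1}"
  shows "G_beta b z = (\<Sum>m. takagi_term b (1 / M_beta b) m z)"
proof -
  let ?t = "\<lambda>m. takagi_term b (1 / M_beta b) m z"
  have "(\<Sum>m. ?t m) = (\<Sum>k. ?t (k + 2)) + (\<Sum>m<2. ?t m)"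
    using summable_takagi_term[OF assms] by (rule suminf_split_initial_segment)
  then show ?thesis
    unfolding G_beta_def by (simp add: takagi_term_def Let_def numeral_2_eq_2)
qed

lemma abs_G_beta_diff_le_if_digits_agree:
  assumes "1 < b"
  obtains K where "0 \<le> K" "\<And>x y n. x \<in> {0..<1} \<Longrightarrow> y \<in> {0..<1} \<Longrightarrow>
      (\<And>k. 1 \<le> k \<Longrightarrow> k \<le> n \<Longrightarrow> beta_digit b k y = beta_digit b k x) \<Longrightarrow>
      \<bar>G_beta b y - G_beta b x\<bar> \<le> K * real (Suc n) * (1 / b) ^ Suc n"
proof -
  define c where "c = 1 / M_beta b"
  define L where "L = 2 * (b * (1 + b * \<bar>c\<bar>))"
  define K where "K = L * (\<Sum>j. real (Suc j) * (1 / b) ^ j)"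
  have "\<bar>G_beta b y - G_beta b x\<bar> \<le> K * real (Suc n) * (1 / b) ^ Suc n"
    if x: "x \<in> {0..<1}" and y: "y \<in> {0..<1}"
      and agree: "\<And>k. 1 \<le> k \<Longrightarrow> k \<le> n \<Longrightarrow> beta_digit b k y = beta_digit b k x" for x y n
  proof -
    define d where "d m = takagi_term b c m y - takagi_term b c m x" for m
    have "G_beta b y - G_beta b x = suminf d"
      unfolding d_def G_beta_eq_suminf_takagi_term[OF assms x] G_beta_eq_suminf_takagi_term[OF assms y]
        c_def[symmetric]
      using assms x y by (intro suminf_diff summable_takagi_term) auto
    moreover have "\<bar>suminf d\<bar> \<le> L * real (Suc n) * (1 / b) ^ Suc n * (\<Sum>j. real (Suc j) * (1 / b) ^ j)"
    proof (rule abs_suminf_le_if_vanishes_upto(2))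
      show "\<bar>d m\<bar> \<le> L * real m * (1 / b) ^ m" for m
        using abs_takagi_term_le[of b x c m] abs_takagi_term_le[of b y c m] assms x y
        unfolding d_def L_def by auto
      show "d m = 0" if "m \<le> n" for m
        using that agree unfolding d_def takagi_term_def by (auto intro!: sum.cong)
    qed (use assms in auto)
    ultimately show ?thesis by (simp add: K_def mult_ac)
  qed
  moreover have "0 \<le> K"
    unfolding K_def L_def using assms summable_Suc_times_power[of "1 / b"]
    by (intro mult_nonneg_nonneg suminf_nonneg) auto
  ultimately show ?thesis using that by blast
qed

lemma times_power_le_powr_if_close:
  fixes q \<alpha> c :: real
  assumes q: "0 < q" "q < 1" and \<alpha>: "0 < \<alpha>" "\<alpha> < 1" and c: "0 < c"
  obtains C where "0 \<le> C" "\<And>n r. c * q ^ n / real n ^ 3 \<le> r \<Longrightarrow> real n * q ^ n \<le> C * r powr \<alpha>"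
proof -
  define \<rho> where "\<rho> = q powr (1 - \<alpha>)"
  define p where "p = q powr \<alpha>"
  have \<rho>: "0 < \<rho>" "\<rho> < 1" unfolding \<rho>_def using q \<alpha> powr_less_mono2[of "1 - \<alpha>" q 1] by auto
  have "(\<lambda>n. real n ^ 4 * \<rho> ^ n) \<longlonglongrightarrow> 0" using \<rho> by real_asymp
  then obtain B where B: "\<And>n. real n ^ 4 * \<rho> ^ n \<le> B"
  proof -
    have "Bseq (\<lambda>n. real n ^ 4 * \<rho> ^ n)" using \<open>_ \<longlonglongrightarrow> 0\<close> by (intro convergent_imp_Bseq convergentI)
    then obtain K where "\<forall>n. norm (real n ^ 4 * \<rho> ^ n) \<le> K" by (rule BseqE)
    then show ?thesis by (intro that[of K]) (simp add: abs_le_iff)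
  qed
  have "0 \<le> B" using B[of 0] by simp
  have "real n * q ^ n \<le> B / c powr \<alpha> * r powr \<alpha>" if close: "c * q ^ n / real n ^ 3 \<le> r" for n r
  proof (cases "n = 0")
    case True
    then show ?thesis using \<open>0 \<le> B\<close> by simp
  next
    case False
    have "q = \<rho> * p" unfolding \<rho>_def p_def using q by (simp add: powr_add[symmetric])
    then have split: "real n * q ^ n = real n ^ 4 * \<rho> ^ n * (p ^ n / real n ^ 3)"
      using False by (simp add: field_simps eval_nat_numeral)
    have "(real n ^ 3) powr \<alpha> \<le> real n ^ 3"
      using False \<alpha> powr_mono[of \<alpha> 1 "real n ^ 3"] by (simp add: Suc_le_eq)
    then have "c powr \<alpha> * p ^ n / real n ^ 3 \<le> c powr \<alpha> * p ^ n / (real n ^ 3) powr \<alpha>"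
      using False c q by (intro divide_left_mono mult_pos_pos) (auto simp: p_def)
    also have "\<dots> = (c * q ^ n / real n ^ 3) powr \<alpha>"
      using c q by (simp add: p_def powr_mult powr_divide powr_power powr_realpow[symmetric] powr_powr mult.commute)
    also have "\<dots> \<le> r powr \<alpha>"
      using close c q \<alpha> by (intro powr_mono2) auto
    finally have "p ^ n / real n ^ 3 \<le> r powr \<alpha> / c powr \<alpha>"
      using c by (simp add: field_simps)
    then have "real n ^ 4 * \<rho> ^ n * (p ^ n / real n ^ 3) \<le> B * (r powr \<alpha> / c powr \<alpha>)"
      using B[of n] \<open>0 \<le> B\<close> \<rho> q by (intro mult_mono) (auto simp: p_def)
    then show ?thesis unfolding split by simp
  qed
  moreover have "0 \<le> B / c powr \<alpha>" using \<open>0 \<le> B\<close> by simp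
  ultimately show ?thesis using that by blast
qed

lemma least_index_le_power_mult:
  fixes d :: "nat \<Rightarrow> real"
  assumes "1 < b" "0 < r" "\<And>j. d j \<le> 1"
  obtains n where "d n \<le> b ^ (n + 1) * r" "\<forall>j<n. b ^ (j + 1) * r < d j"
proof -
  obtain n0 where "1 / r < b ^ n0" using real_arch_pow[OF assms(1)] by blast
  then have "1 < b ^ n0 * r" using assms(2) by (simp add: field_simps)
  also have "\<dots> \<le> b ^ (n0 + 1) * r" using assms(1,2) by (intro mult_right_mono) auto
  finally have "d n0 \<le> b ^ (n0 + 1) * r" using assms(3)[of n0] by linarith
  then have "\<exists>n. d n \<le> b ^ (n + 1) * r \<and> (\<forall>j<n. \<not> d j \<le> b ^ (j + 1) * r)"
    by (rule exists_least_iff[THEN iffD1, OF exI])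
  then show ?thesis using that by (auto simp: not_le)
qed

definition poly_far_orbit :: "real \<Rightarrow> real \<Rightarrow> bool" where
  "poly_far_orbit b x \<longleftrightarrow> (\<exists>c>0. \<forall>i. c / real (Suc i) ^ 3 \<le> dist_int (b * (beta_map b ^^ i) x))"

lemma G_beta_pointwise_holder:
  assumes b: "1 < b" and x: "x \<in> {0..<1}" and "poly_far_orbit b x" and \<alpha>: "0 < \<alpha>" "\<alpha> < 1"
  obtains C where "0 < C" "\<And>y. y \<in> {0..<1} \<Longrightarrow> \<bar>G_beta b y - G_beta b x\<bar> \<le> C * \<bar>y - x\<bar> powr \<alpha>"
proof -
  obtain c where c: "0 < c" and far: "\<And>i. c / real (Suc i) ^ 3 \<le> dist_int (b * (beta_map b ^^ i) x)"
    using \<open>poly_far_orbit b x\<close> unfolding poly_far_orbit_def by blast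
  obtain K where K: "0 \<le> K" "\<And>x y n. x \<in> {0..<1} \<Longrightarrow> y \<in> {0..<1} \<Longrightarrow>
      (\<And>k. 1 \<le> k \<Longrightarrow> k \<le> n \<Longrightarrow> beta_digit b k y = beta_digit b k x) \<Longrightarrow>
      \<bar>G_beta b y - G_beta b x\<bar> \<le> K * real (Suc n) * (1 / b) ^ Suc n"
    using abs_G_beta_diff_le_if_digits_agree[OF b] by blast
  obtain C0 where C0: "0 \<le> C0" "\<And>n r. c * (1 / b) ^ n / real n ^ 3 \<le> r \<Longrightarrow> real n * (1 / b) ^ n \<le> C0 * r powr \<alpha>"
    using times_power_le_powr_if_close[of "1 / b" \<alpha> c] b \<alpha> c by auto
  have "\<bar>G_beta b y - G_beta b x\<bar> \<le> K * C0 * \<bar>y - x\<bar> powr \<alpha>" if y: "y \<in> {0..<1}" for y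
  proof (cases "y = x")
    case False
    define r where "r = \<bar>y - x\<bar>"
    have "0 < r" using False by (simp add: r_def)
    obtain n where close: "dist_int (b * (beta_map b ^^ n) x) \<le> b ^ (n + 1) * r"
      and before: "\<forall>j<n. b ^ (j + 1) * \<bar>y - x\<bar> < dist_int (b * (beta_map b ^^ j) x)"
      using least_index_le_power_mult[of b r "\<lambda>j. dist_int (b * (beta_map b ^^ j) x)"] b \<open>0 < r\<close> dist_int_le_one
      unfolding r_def by blast
    have "\<bar>G_beta b y - G_beta b x\<bar> \<le> K * real (Suc n) * (1 / b) ^ Suc n"
      using before b x y by (intro K(2) beta_digit_eq_if_close) auto
    also have "\<dots> \<le> K * (C0 * r powr \<alpha>)"
    proof -
      have "c / real (Suc n) ^ 3 \<le> b ^ Suc n * r" using far[of n] close by simp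
      then have "c * (1 / b) ^ Suc n / real (Suc n) ^ 3 \<le> r"
        using b by (simp add: field_simps power_one_over)
      then have "real (Suc n) * (1 / b) ^ Suc n \<le> C0 * r powr \<alpha>" by (rule C0(2))
      then show ?thesis using K(1) by (metis mult.assoc mult_left_mono)
    qed
    finally show ?thesis by (simp add: r_def mult.assoc)
  qed simp
  moreover have "0 < K * C0 + 1" using K(1) C0(1) by (simp add: add_nonneg_pos)
  ultimately show ?thesis
  proof (intro that[of "K * C0 + 1"])
    fix y :: real assume "y \<in> {0..<1}"
    then have "\<bar>G_beta b y - G_beta b x\<bar> \<le> K * C0 * \<bar>y - x\<bar> powr \<alpha>" by fact
    also have "\<dots> \<le> (K * C0 + 1) * \<bar>y - x\<bar> powr \<alpha>" by (simp add: mult_right_mono)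
    finally show "\<bar>G_beta b y - G_beta b x\<bar> \<le> (K * C0 + 1) * \<bar>y - x\<bar> powr \<alpha>" .
  qed
qed

lemma sets_borel_affine_vimage:
  fixes c t :: real
  assumes "S \<in> sets borel"
  shows "(\<lambda>x. t + c * x) -` S \<in> sets borel"
  using measurable_sets_borel[of "\<lambda>x. t + c * x" borel S] assms by measurable

lemma emeasure_lborel_affine_vimage:
  fixes c t :: real
  assumes c: "0 < c" and S [measurable]: "S \<in> sets borel"
  shows "ennreal c * emeasure lborel ((\<lambda>x. t + c * x) -` S) = emeasure lborel S"
proof -
  have V: "(\<lambda>x. t + c * x) -` S \<in> sets lborel" using sets_borel_affine_vimage[OF S] by simp
  have "emeasure lborel S = (\<integral>\<^sup>+x. indicator S x \<partial>lborel)" by simp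
  also have "\<dots> = ennreal c * (\<integral>\<^sup>+x. indicator S (t + c * x) \<partial>lborel)"
    using c by (subst nn_integral_real_affine[where c = c and t = t]) auto
  also have "(\<integral>\<^sup>+x. indicator S (t + c * x) \<partial>lborel) = (\<integral>\<^sup>+x. indicator ((\<lambda>x. t + c * x) -` S) x \<partial>lborel)"
    by (simp add: indicator_vimage)
  also have "\<dots> = emeasure lborel ((\<lambda>x. t + c * x) -` S)"
    using V by (rule nn_integral_indicator)
  finally show ?thesis by simp
qed

(* On [0, a) the two branches of the beta-map both start at 0. *)
lemma emeasure_beta_map_vimage_le:
  assumes b: "1 < b" "b \<le> 2" and S [measurable]: "S \<in> sets borel" and a: "a \<le> 1"
  shows "ennreal b * emeasure lborel {x \<in> {0..<a}. beta_map b x \<in> S}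
    \<le> emeasure lborel (S \<inter> {0..<min (b * a) 1}) + emeasure lborel (S \<inter> {0..<b * a - 1})"
proof -
  define V1 where "V1 = (\<lambda>x. 0 + b * x) -` (S \<inter> {0..<min (b * a) 1})"
  define V2 where "V2 = (\<lambda>x. -1 + b * x) -` (S \<inter> {0..<b * a - 1})"
  have V_sets: "V1 \<in> sets lborel" "V2 \<in> sets lborel"
    unfolding V1_def V2_def sets_lborel by (intro sets_borel_affine_vimage; measurable)+
  have "{x \<in> {0..<a}. beta_map b x \<in> S} \<subseteq> V1 \<union> V2"
  proof
    fix x assume "x \<in> {x \<in> {0..<a}. beta_map b x \<in> S}"
    then have x: "0 \<le> x" "x < a" "beta_map b x \<in> S" by auto
    have "0 \<le> b * x" "b * x < b * a" "b * a \<le> 2"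
      using x b a by (auto intro: order_trans[OF mult_left_mono[OF a]])
    show "x \<in> V1 \<union> V2"
    proof (cases "b * x < 1")
      case True
      then have "\<lfloor>b * x\<rfloor> = 0" using \<open>0 \<le> b * x\<close> by (simp add: floor_eq_iff)
      then show ?thesis using x True \<open>0 \<le> b * x\<close> \<open>b * x < b * a\<close> unfolding V1_def beta_map_def by simp
    next
      case False
      then have "\<lfloor>b * x\<rfloor> = 1" using \<open>b * x < b * a\<close> \<open>b * a \<le> 2\<close> by (simp add: floor_eq_iff)
      then show ?thesis using x False \<open>b * x < b * a\<close> unfolding V2_def beta_map_def by simp
    qed
  qed
  then have "emeasure lborel {x \<in> {0..<a}. beta_map b x \<in> S} \<le> emeasure lborel (V1 \<union> V2)"
    using V_sets by (intro emeasure_mono) auto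
  also have "\<dots> \<le> emeasure lborel V1 + emeasure lborel V2"
    using V_sets by (rule emeasure_subadditive)
  finally have "ennreal b * emeasure lborel {x \<in> {0..<a}. beta_map b x \<in> S}
      \<le> ennreal b * emeasure lborel V1 + ennreal b * emeasure lborel V2"
    by (metis distrib_left mult_left_mono zero_le)
  also have "\<dots> = emeasure lborel (S \<inter> {0..<min (b * a) 1}) + emeasure lborel (S \<inter> {0..<b * a - 1})"
    unfolding V1_def V2_def using b by (subst (1 2) emeasure_lborel_affine_vimage; measurable)
  finally show ?thesis .
qed

lemma emeasure_beta_map_vimage_le_linear:
  assumes b: "1 < b" "b \<le> 2" and S: "S \<in> sets borel" and a: "0 \<le> a" "a \<le> 1"
    and bound: "\<And>a'. 0 \<le> a' \<Longrightarrow> a' \<le> 1 \<Longrightarrow> emeasure lborel (S \<inter> {0..<a'}) \<le> ennreal (2 * real n * a' + 1) * L"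
  shows "emeasure lborel {x \<in> {0..<a}. beta_map b x \<in> S} \<le> ennreal (2 * real (Suc n) * a + 1) * L"
proof -
  have "ennreal b * emeasure lborel {x \<in> {0..<a}. beta_map b x \<in> S}
      \<le> emeasure lborel (S \<inter> {0..<min (b * a) 1}) + emeasure lborel (S \<inter> {0..<b * a - 1})"
    using b S a(2) by (rule emeasure_beta_map_vimage_le)
  also have "\<dots> \<le> ennreal (b * (2 * real (Suc n) * a + 1)) * L"
  proof (cases "b * a \<le> 1")
    case True
    then have "emeasure lborel (S \<inter> {0..<min (b * a) 1}) + emeasure lborel (S \<inter> {0..<b * a - 1})
        = emeasure lborel (S \<inter> {0..<b * a})"
      by simp
    also have "\<dots> \<le> ennreal (2 * real n * (b * a) + 1) * L"
      using True a b by (intro bound) auto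
    also have "\<dots> \<le> ennreal (b * (2 * real (Suc n) * a + 1)) * L"
      using b a by (intro mult_right_mono ennreal_leI)
        (simp_all add: algebra_simps, smt (verit) mult_nonneg_nonneg)
    finally show ?thesis .
  next
    case False
    have "b * a \<le> b * 1" using a b by (intro mult_left_mono) auto
    then have "b * a - 1 \<le> 1" using b by linarith
    then have "emeasure lborel (S \<inter> {0..<min (b * a) 1}) + emeasure lborel (S \<inter> {0..<b * a - 1})
        \<le> ennreal (2 * real n * 1 + 1) * L + ennreal (2 * real n * (b * a - 1) + 1) * L"
      using False bound[of 1] bound[of "b * a - 1"] by (intro add_mono) simp_all
    also have "\<dots> = ennreal ((2 * real n * 1 + 1) + (2 * real n * (b * a - 1) + 1)) * L"
      using False by (subst ennreal_plus) (auto simp: distrib_right simp del: ennreal_plus)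
    also have "(2 * real n * 1 + 1) + (2 * real n * (b * a - 1) + 1) = 2 * real n * (b * a) + 2"
      by (simp add: algebra_simps)
    also have "ennreal (2 * real n * (b * a) + 2) * L \<le> ennreal (b * (2 * real (Suc n) * a + 1)) * L"
      using False b by (intro mult_right_mono ennreal_leI) (auto simp: algebra_simps)
    finally show ?thesis .
  qed
  also have "\<dots> = ennreal b * (ennreal (2 * real (Suc n) * a + 1) * L)"
    using b a by (simp add: ennreal_mult mult.assoc)
  finally show ?thesis
    using b by (subst (asm) ennreal_mult_le_mult_iff) auto
qed

lemma emeasure_funpow_beta_map_vimage_le:
  assumes b: "1 < b" "b \<le> 2" and E [measurable]: "E \<in> sets borel" and a: "0 \<le> a" "a \<le> 1"
  shows "emeasure lborel {x \<in> {0..<a}. (beta_map b ^^ n) x \<in> E}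
    \<le> ennreal (2 * real n * a + 1) * emeasure lborel E"
  using a
proof (induction n arbitrary: a)
  case 0
  have "emeasure lborel {x \<in> {0..<a}. x \<in> E} \<le> emeasure lborel E"
    by (intro emeasure_mono) auto
  then show ?case by simp
next
  case (Suc n)
  have "(beta_map b ^^ n) -` E \<in> sets borel"
    using measurable_sets_borel[of "beta_map b ^^ n" borel E] by measurable
  moreover have "(beta_map b ^^ n) -` E \<inter> {0..<a'} = {x \<in> {0..<a'}. (beta_map b ^^ n) x \<in> E}" for a'
    by auto
  ultimately have "emeasure lborel {x \<in> {0..<a}. beta_map b x \<in> (beta_map b ^^ n) -` E}
      \<le> ennreal (2 * real (Suc n) * a + 1) * emeasure lborel E"
    using Suc by (intro emeasure_beta_map_vimage_le_linear[OF b]) auto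
  then show ?case by (simp add: funpow_Suc_right del: funpow.simps)
qed

lemma emeasure_dist_int_less_le:
  assumes b: "1 < b" "b \<le> 2" and "0 \<le> \<delta>"
  shows "emeasure lborel {z \<in> {0..<1}. dist_int (b * z) < \<delta>} \<le> ennreal (6 * \<delta>)"
proof -
  define I where "I k = {(real k - \<delta>) / b <..< (real k + \<delta>) / b}" for k :: nat
  have "{z \<in> {0..<1}. dist_int (b * z) < \<delta>} \<subseteq> (\<Union>k\<in>{0, 1, 2}. I k)"
  proof
    fix z assume z: "z \<in> {z \<in> {0..<1}. dist_int (b * z) < \<delta>}"
    then have "0 \<le> b * z" "b * z < 2" using b by (auto intro: less_le_trans[of _ b])
    then have floor: "0 \<le> \<lfloor>b * z\<rfloor>" "\<lfloor>b * z\<rfloor> \<le> 1" by (simp_all add: floor_le_iff)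
    have "\<exists>k::nat. k \<le> 2 \<and> \<bar>b * z - real k\<bar> < \<delta>"
    proof (cases "frac (b * z) < \<delta>")
      case True
      then show ?thesis
        using floor by (intro exI[of _ "nat \<lfloor>b * z\<rfloor>"]) (simp add: frac_def nat_le_iff)
    next
      case False
      then have "1 - frac (b * z) < \<delta>" using z by (auto simp: dist_int_def min_less_iff_disj)
      then show ?thesis
        using floor frac_lt_1[of "b * z"] by (intro exI[of _ "nat (\<lfloor>b * z\<rfloor> + 1)"]) (simp add: frac_def nat_le_iff)
    qed
    then obtain k :: nat where "k \<le> 2" "\<bar>b * z - real k\<bar> < \<delta>" by blast
    then have "z \<in> I k" "k \<in> {0, 1, 2}"
      using b unfolding I_def by (auto simp: field_simps abs_less_iff)
    then show "z \<in> (\<Union>k\<in>{0, 1, 2}. I k)" by blast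
  qed
  then have "emeasure lborel {z \<in> {0..<1}. dist_int (b * z) < \<delta>} \<le> emeasure lborel (\<Union>k\<in>{0, 1, 2}. I k)"
    unfolding I_def by (intro emeasure_mono) auto
  also have "\<dots> \<le> (\<Sum>k\<in>{0, 1, 2}. emeasure lborel (I k))"
    unfolding I_def by (intro emeasure_subadditive_finite) auto
  also have "\<dots> = (\<Sum>k\<in>{0, 1, 2::nat}. ennreal (2 * \<delta> / b))"
    using b \<open>0 \<le> \<delta>\<close> unfolding I_def by (intro sum.cong refl) (simp add: divide_right_mono diff_divide_distrib add_divide_distrib)
  also have "\<dots> = ennreal (3 * (2 * \<delta> / b))"
    using b \<open>0 \<le> \<delta>\<close> by (simp add: numeral_mult_ennreal del: times_divide_eq_right)
  also have "\<dots> \<le> ennreal (6 * \<delta>)"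
    using b \<open>0 \<le> \<delta>\<close> mult_right_mono[of 1 b "6 * \<delta>"] by (intro ennreal_leI) (simp add: field_simps)
  finally show ?thesis .
qed

lemma emeasure_orbit_near_int_le:
  assumes b: "1 < b" "b \<le> 2" and "0 \<le> \<delta>"
  shows "emeasure lborel {x \<in> {0..<1}. dist_int (b * (beta_map b ^^ i) x) < \<delta>}
    \<le> ennreal (6 * (2 * real i + 1) * \<delta>)"
proof -
  let ?E = "{z \<in> {0..<1}. dist_int (b * z) < \<delta>}"
  have E: "?E \<in> sets borel" by measurable
  have "{x \<in> {0..<1}. dist_int (b * (beta_map b ^^ i) x) < \<delta>}
      = {x \<in> {0..<1}. (beta_map b ^^ i) x \<in> ?E}"
    using funpow_beta_map_in_unit[where b = b and n = i] by auto
  also have "emeasure lborel \<dots> \<le> ennreal (2 * real i * 1 + 1) * emeasure lborel ?E"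
    by (rule emeasure_funpow_beta_map_vimage_le[OF b E]) auto
  also have "\<dots> \<le> ennreal (2 * real i + 1) * ennreal (6 * \<delta>)"
    using emeasure_dist_int_less_le[OF b \<open>0 \<le> \<delta>\<close>] by (simp add: mult_left_mono)
  also have "\<dots> = ennreal (6 * (2 * real i + 1) * \<delta>)"
    using \<open>0 \<le> \<delta>\<close> by (subst ennreal_mult[symmetric]) (simp_all add: mult_ac)
  finally show ?thesis .
qed

lemma null_sets_lebesgue_if_small_covers:
  fixes N :: "real set"
  assumes "\<And>e. 0 < e \<Longrightarrow> \<exists>B \<in> sets borel. N \<subseteq> B \<and> emeasure lborel B \<le> ennreal e"
  shows "N \<in> null_sets lebesgue"
proof -
  have "\<exists>T. N \<subseteq> T \<and> T \<in> lmeasurable \<and> measure lebesgue T \<le> e" if "0 < e" for e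
  proof -
    obtain B where B: "B \<in> sets borel" "N \<subseteq> B" "emeasure lborel B \<le> ennreal e"
      using assms[OF \<open>0 < e\<close>] by blast
    have fin: "emeasure lborel B < \<infinity>"
      using B(3) by (metis ennreal_less_top infinity_ennreal_def le_less_trans)
    have "B \<in> sets lebesgue" using B(1) by simp
    then have "B \<in> lmeasurable"
      using fin B(1) by (intro fmeasurableI) (simp_all add: emeasure_completion)
    moreover have "measure lebesgue B \<le> e"
      using B(1,3) \<open>0 < e\<close> by (simp add: measure_def enn2real_leI)
    ultimately show ?thesis using B(2) by blast
  qed
  then have "negligible N" by (simp add: negligible_outer_le)
  then show ?thesis by (simp add: negligible_iff_null_sets)
qed

lemma null_sets_not_poly_far_orbit:
  assumes b: "1 < b" "b \<le> 2"
  shows "{x \<in> {0..<1}. \<not> poly_far_orbit b x} \<in> null_sets lebesgue"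
proof (rule null_sets_lebesgue_if_small_covers)
  fix e :: real assume "0 < e"
  have summable: "summable (\<lambda>i. 12 / real (Suc i) ^ 2)"
    using inverse_power_summable[of 2, where 'a = real]
    by (subst summable_Suc_iff) (simp add: summable_mult divide_inverse)
  define Z where "Z = (\<Sum>i. 12 / real (Suc i) ^ 2)"
  have "0 \<le> Z" unfolding Z_def using summable by (intro suminf_nonneg) auto
  define c where "c = e / (Z + 1)"
  have "0 < c" using \<open>0 < e\<close> \<open>0 \<le> Z\<close> by (simp add: c_def)
  define A where "A i = {x \<in> {0..<1}. dist_int (b * (beta_map b ^^ i) x) < c / real (Suc i) ^ 3}" for i
  have A_sets: "A i \<in> sets borel" for i unfolding A_def by measurable
  have "{x \<in> {0..<1}. \<not> poly_far_orbit b x} \<subseteq> (\<Union>i. A i)"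
    using \<open>0 < c\<close> unfolding poly_far_orbit_def A_def by (auto simp: not_le)
  moreover have "(\<Union>i. A i) \<in> sets borel" using A_sets by auto
  moreover have "emeasure lborel (\<Union>i. A i) \<le> ennreal e"
  proof -
    have "emeasure lborel (\<Union>i. A i) \<le> (\<Sum>i. emeasure lborel (A i))"
      using A_sets by (intro emeasure_subadditive_countably) auto
    also have "\<dots> \<le> (\<Sum>i. ennreal (c * (12 / real (Suc i) ^ 2)))"
    proof (intro suminf_le summableI)
      fix i
      have "emeasure lborel (A i) \<le> ennreal (6 * (2 * real i + 1) * (c / real (Suc i) ^ 3))"
        unfolding A_def using b \<open>0 < c\<close> by (intro emeasure_orbit_near_int_le) auto
      also have "\<dots> \<le> ennreal (12 * real (Suc i) * (c / real (Suc i) ^ 3))"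
        using \<open>0 < c\<close> by (intro ennreal_leI mult_right_mono) auto
      also have "12 * real (Suc i) * (c / real (Suc i) ^ 3) = c * (12 / real (Suc i) ^ 2)"
        by (simp add: field_simps power3_eq_cube power2_eq_square del: of_nat_Suc)
      finally show "emeasure lborel (A i) \<le> ennreal (c * (12 / real (Suc i) ^ 2))" .
    qed
    also have "\<dots> = ennreal (\<Sum>i. c * (12 / real (Suc i) ^ 2))"
      using summable \<open>0 < c\<close> by (intro suminf_ennreal2 summable_mult) auto
    also have "(\<Sum>i. c * (12 / real (Suc i) ^ 2)) = c * Z"
      unfolding Z_def using summable by (rule suminf_mult)
    also have "\<dots> \<le> ennreal e"
      using \<open>0 < e\<close> \<open>0 \<le> Z\<close> by (intro ennreal_leI) (simp add: c_def field_simps)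
    finally show ?thesis .
  qed
  ultimately show "\<exists>B\<in>sets borel. {x \<in> {0..<1}. \<not> poly_far_orbit b x} \<subseteq> B \<and> emeasure lborel B \<le> ennreal e"
    by blast
qed

theorem theorem3p3:
  fixes \<beta> :: real
  assumes "1 < \<beta>" and "\<beta> \<le> 2"
  shows "\<exists>F \<subseteq> {0..1}. {0..1} - F \<in> null_sets lebesgue \<and>
    (\<forall>x \<in> F. \<forall>\<alpha> \<in> {0<..<1::real}. \<exists>C > 0. \<forall>y \<in> {0<..<1::real}.
        \<bar>G_beta \<beta> y - G_beta \<beta> x\<bar> \<le> C * \<bar>y - x\<bar> powr \<alpha>)"
proof -
  define F where "F = {x \<in> {0..<1}. poly_far_orbit \<beta> x}"
  have "negligible {x \<in> {0..<1}. \<not> poly_far_orbit \<beta> x}"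
    using null_sets_not_poly_far_orbit[OF assms] by (simp add: negligible_iff_null_sets)
  then have "negligible ({0..1} - F)"
    by (rule negligible_subset[OF negligible_insert[of 1, THEN iffD2]]) (auto simp: F_def)
  moreover have "\<exists>C>0. \<forall>y \<in> {0<..<1}. \<bar>G_beta \<beta> y - G_beta \<beta> x\<bar> \<le> C * \<bar>y - x\<bar> powr \<alpha>"
    if "x \<in> F" "\<alpha> \<in> {0<..<1}" for x \<alpha> :: real
  proof -
    have "x \<in> {0..<1}" "poly_far_orbit \<beta> x" "0 < \<alpha>" "\<alpha> < 1" using that by (auto simp: F_def)
    then obtain C where "0 < C" "\<And>y. y \<in> {0..<1} \<Longrightarrow> \<bar>G_beta \<beta> y - G_beta \<beta> x\<bar> \<le> C * \<bar>y - x\<bar> powr \<alpha>"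
      using G_beta_pointwise_holder assms(1) by metis
    then show ?thesis by auto
  qed
  moreover have "F \<subseteq> {0..1}" by (auto simp: F_def)
  ultimately show ?thesis by (auto simp: negligible_iff_null_sets)
qed

end
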